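(* Let $\mathbf{A}$ be a stably free ideal domain (resp. a semistably free ideal domain) and let $S\subseteq\mathbf{A}$ be a two-sided denominator set with $0\notin S$. Then the localization $S^{-1}\mathbf{A}$ is a stably free ideal domain (resp. a semistably free ideal domain).
   Context: A module $P$ over a ring $\mathbf{A}$ is stably free if there exist integers $q,r\ge 0$ with $P\oplus \mathbf{A}^{q}\cong \mathbf{A}^{q+r}$. A stably free ideal domain is a (left and right) Noetherian domain in which every left ideal and every right ideal is stably free. A semistably free ideal domain is a (left and right) Ore domain in which every finitely generated left ideal and every finitely generated right ideal is stably free. A two-sided denominator set is a multiplicatively closed subset $S$ (containing $1$) satisfying the left and right Ore conditions and left and right reversibility, so that the classical localization $S^{-1}\mathbf{A}=\mathbf{A}S^{-1}$ exists. *)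

theory Defs
  imports Main
begin

text \<open>Modules are left (resp. right) modules; the free module A^n is modelled as
the functions nat => A vanishing outside {0..<n}.\<close>

definition vecs :: "nat \<Rightarrow> (nat \<Rightarrow> 'a::zero) set" where
  "vecs n = {v. \<forall>i\<ge>n. v i = 0}"

definition left_ideal :: "'a::ring_1 set \<Rightarrow> bool" where
  "left_ideal I \<longleftrightarrow> 0 \<in> I \<and> (\<forall>x\<in>I. \<forall>y\<in>I. x + y \<in> I) \<and> (\<forall>a. \<forall>x\<in>I. a * x \<in> I)"

definition right_ideal :: "'a::ring_1 set \<Rightarrow> bool" where
  "right_ideal I \<longleftrightarrow> 0 \<in> I \<and> (\<forall>x\<in>I. \<forall>y\<in>I. x + y \<in> I) \<and> (\<forall>a. \<forall>x\<in>I. x * a \<in> I)"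

definition left_span :: "'a::ring_1 set \<Rightarrow> 'a set" where
  "left_span G = {x. \<exists>c. x = (\<Sum>g\<in>G. c g * g)}"

definition right_span :: "'a::ring_1 set \<Rightarrow> 'a set" where
  "right_span G = {x. \<exists>c. x = (\<Sum>g\<in>G. g * c g)}"

definition fg_left_ideal :: "'a::ring_1 set \<Rightarrow> bool" where
  "fg_left_ideal I \<longleftrightarrow> (\<exists>G. finite G \<and> I = left_span G)"

definition fg_right_ideal :: "'a::ring_1 set \<Rightarrow> bool" where
  "fg_right_ideal I \<longleftrightarrow> (\<exists>G. finite G \<and> I = right_span G)"

text \<open>A left ideal P is stably free (as left module): P \<oplus> A^q \<cong> A^(q+r) as left A-modules.\<close>
definition stably_free_left :: "'a::ring_1 set \<Rightarrow> bool" where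
  "stably_free_left P \<longleftrightarrow> (\<exists>q r f. bij_betw f (P \<times> vecs q) (vecs (q + r)) \<and>
     (\<forall>x\<in>P \<times> vecs q. \<forall>y\<in>P \<times> vecs q.
        f (fst x + fst y, \<lambda>k. snd x k + snd y k) = (\<lambda>k. f x k + f y k)) \<and>
     (\<forall>a. \<forall>x\<in>P \<times> vecs q. f (a * fst x, \<lambda>k. a * snd x k) = (\<lambda>k. a * f x k)))"

definition stably_free_right :: "'a::ring_1 set \<Rightarrow> bool" where
  "stably_free_right P \<longleftrightarrow> (\<exists>q r f. bij_betw f (P \<times> vecs q) (vecs (q + r)) \<and>
     (\<forall>x\<in>P \<times> vecs q. \<forall>y\<in>P \<times> vecs q.
        f (fst x + fst y, \<lambda>k. snd x k + snd y k) = (\<lambda>k. f x k + f y k)) \<and>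
     (\<forall>a. \<forall>x\<in>P \<times> vecs q. f (fst x * a, \<lambda>k. snd x k * a) = (\<lambda>k. f x k * a)))"

text \<open>Ring-theoretic properties of the whole ring (the type).  Note ring_1 already has 0 \<noteq> 1.\<close>
definition is_domain :: "'a::ring_1 itself \<Rightarrow> bool" where
  "is_domain _ \<longleftrightarrow> (\<forall>a b :: 'a. a * b = 0 \<longrightarrow> a = 0 \<or> b = 0)"

definition left_noetherian :: "'a::ring_1 itself \<Rightarrow> bool" where
  "left_noetherian _ \<longleftrightarrow> (\<forall>I :: nat \<Rightarrow> 'a set. (\<forall>n. left_ideal (I n)) \<and> mono I \<longrightarrow>
       (\<exists>n. \<forall>m\<ge>n. I m = I n))"

definition right_noetherian :: "'a::ring_1 itself \<Rightarrow> bool" where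
  "right_noetherian _ \<longleftrightarrow> (\<forall>I :: nat \<Rightarrow> 'a set. (\<forall>n. right_ideal (I n)) \<and> mono I \<longrightarrow>
       (\<exists>n. \<forall>m\<ge>n. I m = I n))"

text \<open>Ore domain: for nonzero a, b, Aa \<inter> Ab \<noteq> 0 (left) and aA \<inter> bA \<noteq> 0 (right).\<close>
definition ore_domain :: "'a::ring_1 itself \<Rightarrow> bool" where
  "ore_domain T \<longleftrightarrow> is_domain T \<and>
     (\<forall>a b :: 'a. a \<noteq> 0 \<and> b \<noteq> 0 \<longrightarrow> (\<exists>x y. x * a = y * b \<and> x * a \<noteq> 0)) \<and>
     (\<forall>a b :: 'a. a \<noteq> 0 \<and> b \<noteq> 0 \<longrightarrow> (\<exists>x y. a * x = b * y \<and> a * x \<noteq> 0))"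

definition stably_free_ideal_domain :: "'a::ring_1 itself \<Rightarrow> bool" where
  "stably_free_ideal_domain T \<longleftrightarrow> is_domain T \<and> left_noetherian T \<and> right_noetherian T \<and>
     (\<forall>I :: 'a set. left_ideal I \<longrightarrow> stably_free_left I) \<and>
     (\<forall>I :: 'a set. right_ideal I \<longrightarrow> stably_free_right I)"

definition semistably_free_ideal_domain :: "'a::ring_1 itself \<Rightarrow> bool" where
  "semistably_free_ideal_domain T \<longleftrightarrow> ore_domain T \<and>
     (\<forall>I :: 'a set. fg_left_ideal I \<longrightarrow> stably_free_left I) \<and>
     (\<forall>I :: 'a set. fg_right_ideal I \<longrightarrow> stably_free_right I)"

definition two_sided_denominator_set :: "'a::ring_1 set \<Rightarrow> bool" where
  "two_sided_denominator_set S \<longleftrightarrow> 1 \<in> S \<and> (\<forall>s\<in>S. \<forall>t\<in>S. s * t \<in> S) \<and>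
     (\<forall>a. \<forall>s\<in>S. \<exists>b. \<exists>t\<in>S. a * t = s * b) \<and>
     (\<forall>a. \<forall>s\<in>S. \<exists>b. \<exists>t\<in>S. t * a = b * s) \<and>
     (\<forall>a. \<forall>s\<in>S. s * a = 0 \<longrightarrow> (\<exists>t\<in>S. a * t = 0)) \<and>
     (\<forall>a. \<forall>s\<in>S. a * s = 0 \<longrightarrow> (\<exists>t\<in>S. t * a = 0))"

definition ring_hom :: "('a::ring_1 \<Rightarrow> 'b::ring_1) \<Rightarrow> bool" where
  "ring_hom \<phi> \<longleftrightarrow> \<phi> 1 = 1 \<and> (\<forall>x y. \<phi> (x + y) = \<phi> x + \<phi> y) \<and> (\<forall>x y. \<phi> (x * y) = \<phi> x * \<phi> y)"

definition is_unit :: "'b::ring_1 \<Rightarrow> bool" where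
  "is_unit u \<longleftrightarrow> (\<exists>v. u * v = 1 \<and> v * u = 1)"

definition classical_localization :: "'a::ring_1 set \<Rightarrow> ('a \<Rightarrow> 'b::ring_1) \<Rightarrow> bool" where
  "classical_localization S \<phi> \<longleftrightarrow> ring_hom \<phi> \<and> (\<forall>s\<in>S. is_unit (\<phi> s)) \<and>
     (\<forall>b. \<exists>a. \<exists>s\<in>S. b * \<phi> s = \<phi> a) \<and>
     (\<forall>b. \<exists>a. \<exists>s\<in>S. \<phi> s * b = \<phi> a) \<and>
     (\<forall>a. \<phi> a = 0 \<longleftrightarrow> (\<exists>s\<in>S. a * s = 0))"

end

theory Submission
  imports Defs
begin

text \<open>
  Let \<open>\<phi> : A \<rightarrow> B = S\<^sup>-\<^sup>1A\<close> be the classical localization of a domain \<open>A\<close> at a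
  denominator set \<open>S\<close> with \<open>0 \<notin> S\<close>.  Then \<open>\<phi>\<close> is injective, every element of \<open>B\<close> is a
  left fraction \<open>\<phi>(s)\<^sup>-\<^sup>1 \<phi>(a)\<close>, and finitely many fractions have a common denominator.
  Every left ideal \<open>J\<close> of \<open>B\<close> is the extension \<open>S\<^sup>-\<^sup>1I\<close> of its contraction \<open>I = \<phi>\<^sup>-\<^sup>1(J)\<close>,
  and a finitely generated \<open>J\<close> is the extension of the finitely generated ideal spanned
  by numerators of its generators.  The heart of the proof is that an \<open>A\<close>-linear
  isomorphism \<open>f : I \<oplus> A\<^sup>q \<cong> A\<^sup>q\<^sup>+\<^sup>r\<close> induces the \<open>B\<close>-linear isomorphism
  \<open>s\<^sup>-\<^sup>1(a, c) \<mapsto> s\<^sup>-\<^sup>1 f(a, c)\<close> on \<open>S\<^sup>-\<^sup>1I \<oplus> B\<^sup>q\<close> (locale \<open>left_presentation\<close>).  Being a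
  domain, Noetherian, or Ore also transfers along \<open>\<phi>\<close> by clearing denominators.

  The right-handed statements are reduced to the left-handed ones by passing to
  opposite rings: the first section constructs the opposite ring and shows that it
  exchanges left and right ideals and left and right stable freeness, and the
  localization of the opposite ring is the opposite of the localization.
\<close>

section \<open>Opposite rings\<close>

datatype 'a opp = Opp (unOpp: 'a)

instantiation opp :: (ring_1) ring_1
begin
definition zero_opp_def: "0 = Opp 0"
definition one_opp_def: "1 = Opp 1"
definition plus_opp_def: "x + y = Opp (unOpp x + unOpp y)"
definition minus_opp_def: "x - y = Opp (unOpp x - unOpp y)"
definition uminus_opp_def: "- x = Opp (- unOpp x)"
definition times_opp_def: "x * y = Opp (unOpp y * unOpp x)"
instance
  by standard (auto simp: zero_opp_def one_opp_def plus_opp_def minus_opp_def uminus_opp_def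
      times_opp_def algebra_simps opp.expand)
end

lemma Opp_simps [simp]:
  fixes a b :: "'a::ring_1"
  shows "Opp a + Opp b = Opp (a + b)" "Opp a * Opp b = Opp (b * a)"
    "Opp a = 0 \<longleftrightarrow> a = 0" "Opp a = 1 \<longleftrightarrow> a = 1"
    "unOpp (x + y) = unOpp x + unOpp y" "unOpp (x * y) = unOpp y * unOpp x"
    "unOpp (0::'a opp) = 0" "unOpp (1::'a opp) = 1"
  by (auto simp: zero_opp_def one_opp_def plus_opp_def times_opp_def)

lemma bij_Opp: "bij Opp"
  by (metis bij_betw_def inj_def opp.inject opp.exhaust surj_def)

lemma bij_unOpp: "bij unOpp"
  by (metis bij_betw_def inj_def opp.expand opp.sel surj_def)

lemma unOpp_image_Opp_image [simp]: "unOpp ` Opp ` A = A"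
  by (simp add: image_image)

lemma Opp_image_unOpp_image [simp]: "Opp ` unOpp ` X = X"
  by (force simp: image_iff opp.expand)

definition anti_hom :: "('a::ring_1 \<Rightarrow> 'c::ring_1) \<Rightarrow> bool" where
  "anti_hom h \<longleftrightarrow> (\<forall>x y. h (x + y) = h x + h y) \<and> (\<forall>x y. h (x * y) = h y * h x)"

lemma anti_hom_Opp: "anti_hom Opp" and anti_hom_unOpp: "anti_hom unOpp"
  by (simp_all add: anti_hom_def)

lemma anti_hom_zero: "anti_hom h \<Longrightarrow> h 0 = 0"
  unfolding anti_hom_def by (metis add_cancel_right_right add_0)

lemma anti_hom_inv:
  assumes "bij h" "anti_hom h" shows "anti_hom (inv h)"
  using assms unfolding anti_hom_def by (metis bij_inv_eq_iff)

lemma bij_betw_vecs_map: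
  assumes "bij h" "h 0 = 0"
  shows "bij_betw (\<lambda>w k. h (w k)) (vecs n) (vecs n)"
proof (rule bij_betw_byWitness[where f'="\<lambda>v k. inv h (v k)"])
  have "inv h 0 = 0" using assms by (metis bij_def inv_f_f)
  then show "(\<lambda>v k. inv h (v k)) ` vecs n \<subseteq> vecs n" by (auto simp: vecs_def)
  show "(\<lambda>w k. h (w k)) ` vecs n \<subseteq> vecs n" using assms(2) by (auto simp: vecs_def)
qed (use assms in \<open>auto simp: bij_def inv_f_f surj_f_inv_f\<close>)

lemma bij_betw_pair_map:
  assumes "bij h" "h 0 = 0"
  shows "bij_betw (\<lambda>p. (h (fst p), \<lambda>k. h (snd p k))) (I \<times> vecs q) (h ` I \<times> vecs q)"
proof -
  have "bij_betw (map_prod h (\<lambda>w k. h (w k))) (I \<times> vecs q) (h ` I \<times> vecs q)"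
  proof (rule bij_betw_map_prod)
    show "bij_betw h I (h ` I)" using assms(1) by (meson bij_betw_subset subset_UNIV)
  qed (rule bij_betw_vecs_map[OF assms])
  then show ?thesis by (simp add: map_prod_def case_prod_beta')
qed

lemma bij_betw_inv_pair_map:
  assumes "bij h" "anti_hom h"
  shows "bij_betw (\<lambda>p. (inv h (fst p), \<lambda>k. inv h (snd p k))) (h ` I \<times> vecs q) (I \<times> vecs q)"
proof -
  have hI: "inv h ` h ` I = I" using assms(1) by (simp add: bij_def image_image)
  have "bij (inv h)" "inv h 0 = 0"
    using assms by (simp_all add: bij_imp_bij_inv anti_hom_zero anti_hom_inv)
  from bij_betw_pair_map[OF this, of "h ` I" q]
  show "bij_betw (\<lambda>p. (inv h (fst p), \<lambda>k. inv h (snd p k))) (h ` I \<times> vecs q) (I \<times> vecs q)"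
    by (simp only: hI)
qed

text \<open>If \<open>f : I \<oplus> A\<^sup>q \<cong> A\<^sup>q\<^sup>+\<^sup>r\<close> is right linear, then \<open>h \<circ> f \<circ> h\<^sup>-\<^sup>1\<close> is left linear, and vice versa.\<close>

lemma stably_free_right_anti_hom:
  fixes h :: "'a::ring_1 \<Rightarrow> 'c::ring_1"
  assumes h: "bij h" "anti_hom h" and sf: "stably_free_right I"
  shows "stably_free_left (h ` I)"
proof -
  obtain q r f where bij: "bij_betw f (I \<times> vecs q) (vecs (q + r))"
    and f_add: "\<forall>x\<in>I \<times> vecs q. \<forall>y\<in>I \<times> vecs q.
        f (fst x + fst y, \<lambda>k. snd x k + snd y k) = (\<lambda>k. f x k + f y k)"
    and f_scale: "\<forall>a. \<forall>x\<in>I \<times> vecs q. f (fst x * a, \<lambda>k. snd x k * a) = (\<lambda>k. f x k * a)"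
    using sf unfolding stably_free_right_def by blast
  define H :: "'c \<times> (nat \<Rightarrow> 'c) \<Rightarrow> 'a \<times> (nat \<Rightarrow> 'a)"
    where "H = (\<lambda>p. (inv h (fst p), \<lambda>k. inv h (snd p k)))"
  define g where "g = (\<lambda>w k. h (w k)) \<circ> (f \<circ> H)"
  have hinv: "anti_hom (inv h)" using h by (rule anti_hom_inv)
  have hh: "h (inv h x) = x" for x using h(1) by (simp add: bij_def surj_f_inv_f)
  have H: "bij_betw H (h ` I \<times> vecs q) (I \<times> vecs q)"
    unfolding H_def using bij_betw_inv_pair_map[OF h] .
  have "bij_betw g (h ` I \<times> vecs q) (vecs (q + r))"
    unfolding g_def
    by (rule bij_betw_trans[OF bij_betw_trans[OF H bij] bij_betw_vecs_map])
      (use h in \<open>simp_all add: anti_hom_zero\<close>)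
  moreover have "g (fst x + fst y, \<lambda>k. snd x k + snd y k) = (\<lambda>k. g x k + g y k)"
    if "x \<in> h ` I \<times> vecs q" "y \<in> h ` I \<times> vecs q" for x y
  proof -
    have "H (fst x + fst y, \<lambda>k. snd x k + snd y k) = (fst (H x) + fst (H y), \<lambda>k. snd (H x) k + snd (H y) k)"
      using hinv unfolding H_def anti_hom_def by simp
    then have "f (H (fst x + fst y, \<lambda>k. snd x k + snd y k)) = (\<lambda>k. f (H x) k + f (H y) k)"
      using f_add[rule_format, OF bij_betw_apply[OF H that(1)] bij_betw_apply[OF H that(2)]]
      by simp
    then show ?thesis using h(2) unfolding g_def anti_hom_def by simp
  qed
  moreover have "g (a * fst x, \<lambda>k. a * snd x k) = (\<lambda>k. a * g x k)"
    if "x \<in> h ` I \<times> vecs q" for a x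
  proof -
    have "H (a * fst x, \<lambda>k. a * snd x k) = (fst (H x) * inv h a, \<lambda>k. snd (H x) k * inv h a)"
      using hinv unfolding H_def anti_hom_def by simp
    then have "f (H (a * fst x, \<lambda>k. a * snd x k)) = (\<lambda>k. f (H x) k * inv h a)"
      using f_scale[rule_format, OF bij_betw_apply[OF H that], of "inv h a"] by simp
    then show ?thesis using h(2) hh unfolding g_def anti_hom_def by simp
  qed
  ultimately show ?thesis unfolding stably_free_left_def by blast
qed

lemma stably_free_left_anti_hom:
  fixes h :: "'a::ring_1 \<Rightarrow> 'c::ring_1"
  assumes h: "bij h" "anti_hom h" and sf: "stably_free_left I"
  shows "stably_free_right (h ` I)"
proof -
  obtain q r f where bij: "bij_betw f (I \<times> vecs q) (vecs (q + r))"
    and f_add: "\<forall>x\<in>I \<times> vecs q. \<forall>y\<in>I \<times> vecs q.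
        f (fst x + fst y, \<lambda>k. snd x k + snd y k) = (\<lambda>k. f x k + f y k)"
    and f_scale: "\<forall>a. \<forall>x\<in>I \<times> vecs q. f (a * fst x, \<lambda>k. a * snd x k) = (\<lambda>k. a * f x k)"
    using sf unfolding stably_free_left_def by blast
  define H :: "'c \<times> (nat \<Rightarrow> 'c) \<Rightarrow> 'a \<times> (nat \<Rightarrow> 'a)"
    where "H = (\<lambda>p. (inv h (fst p), \<lambda>k. inv h (snd p k)))"
  define g where "g = (\<lambda>w k. h (w k)) \<circ> (f \<circ> H)"
  have hinv: "anti_hom (inv h)" using h by (rule anti_hom_inv)
  have hh: "h (inv h x) = x" for x using h(1) by (simp add: bij_def surj_f_inv_f)
  have H: "bij_betw H (h ` I \<times> vecs q) (I \<times> vecs q)"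
    unfolding H_def using bij_betw_inv_pair_map[OF h] .
  have "bij_betw g (h ` I \<times> vecs q) (vecs (q + r))"
    unfolding g_def
    by (rule bij_betw_trans[OF bij_betw_trans[OF H bij] bij_betw_vecs_map])
      (use h in \<open>simp_all add: anti_hom_zero\<close>)
  moreover have "g (fst x + fst y, \<lambda>k. snd x k + snd y k) = (\<lambda>k. g x k + g y k)"
    if "x \<in> h ` I \<times> vecs q" "y \<in> h ` I \<times> vecs q" for x y
  proof -
    have "H (fst x + fst y, \<lambda>k. snd x k + snd y k) = (fst (H x) + fst (H y), \<lambda>k. snd (H x) k + snd (H y) k)"
      using hinv unfolding H_def anti_hom_def by simp
    then have "f (H (fst x + fst y, \<lambda>k. snd x k + snd y k)) = (\<lambda>k. f (H x) k + f (H y) k)"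
      using f_add[rule_format, OF bij_betw_apply[OF H that(1)] bij_betw_apply[OF H that(2)]]
      by simp
    then show ?thesis using h(2) unfolding g_def anti_hom_def by simp
  qed
  moreover have "g (fst x * a, \<lambda>k. snd x k * a) = (\<lambda>k. g x k * a)"
    if "x \<in> h ` I \<times> vecs q" for a x
  proof -
    have "H (fst x * a, \<lambda>k. snd x k * a) = (inv h a * fst (H x), \<lambda>k. inv h a * snd (H x) k)"
      using hinv unfolding H_def anti_hom_def by simp
    then have "f (H (fst x * a, \<lambda>k. snd x k * a)) = (\<lambda>k. inv h a * f (H x) k)"
      using f_scale[rule_format, OF bij_betw_apply[OF H that], of "inv h a"] by simp
    then show ?thesis using h(2) hh unfolding g_def anti_hom_def by simp
  qed
  ultimately show ?thesis unfolding stably_free_right_def by blast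
qed

lemma stably_free_left_Opp_iff: "stably_free_left (Opp ` I) \<longleftrightarrow> stably_free_right (I :: 'a::ring_1 set)"
  using stably_free_right_anti_hom[OF bij_Opp anti_hom_Opp, of I]
    stably_free_left_anti_hom[OF bij_unOpp anti_hom_unOpp, of "Opp ` I"]
  by auto

lemma all_opp: "(\<forall>x. P x) \<longleftrightarrow> (\<forall>a. P (Opp a))"
  by (metis opp.exhaust)

lemma ex_opp: "(\<exists>x. P x) \<longleftrightarrow> (\<exists>a. P (Opp a))"
  by (metis opp.exhaust)

lemma left_ideal_Opp_iff: "left_ideal (Opp ` I) \<longleftrightarrow> right_ideal (I :: 'a::ring_1 set)"
  unfolding left_ideal_def right_ideal_def
  by (simp add: all_opp image_iff zero_opp_def)

lemma left_span_Opp: "left_span (Opp ` G) = Opp ` right_span (G :: 'a::ring_1 set)"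
proof -
  have sum_Opp: "(\<Sum>x\<in>A. Opp (u x)) = Opp (\<Sum>x\<in>A. u x)" for A and u :: "'a \<Rightarrow> 'a"
    by (induction A rule: infinite_finite_induct) (simp_all add: zero_opp_def)
  have comb: "(\<Sum>g\<in>Opp ` G. c g * g) = Opp (\<Sum>h\<in>G. h * unOpp (c (Opp h)))" for c
  proof -
    have "(\<Sum>g\<in>Opp ` G. c g * g) = (\<Sum>h\<in>G. Opp (h * unOpp (c (Opp h))))"
      by (simp add: sum.reindex inj_on_def) (metis opp.exhaust_sel Opp_simps(2))
    then show ?thesis by (simp add: sum_Opp)
  qed
  show ?thesis
  proof (intro equalityI subsetI)
    fix x assume "x \<in> left_span (Opp ` G)"
    then obtain c where "x = Opp (\<Sum>h\<in>G. h * unOpp (c (Opp h)))"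
      unfolding left_span_def comb by blast
    then show "x \<in> Opp ` right_span G" unfolding right_span_def
      by (rule image_eqI) (rule CollectI, rule exI, rule refl)
  next
    fix x assume "x \<in> Opp ` right_span G"
    then obtain d where "x = Opp (\<Sum>h\<in>G. h * d h)" unfolding right_span_def by blast
    then have "x = (\<Sum>g\<in>Opp ` G. Opp (d (unOpp g)) * g)" by (simp add: comb)
    then show "x \<in> left_span (Opp ` G)"
      unfolding left_span_def by (intro CollectI exI[of _ "\<lambda>g. Opp (d (unOpp g))"])
  qed
qed

lemma fg_left_ideal_Opp_iff: "fg_left_ideal (Opp ` I) \<longleftrightarrow> fg_right_ideal (I :: 'a::ring_1 set)"
proof
  assume "fg_left_ideal (Opp ` I)"
  then obtain G where G: "finite G" "Opp ` I = left_span G" unfolding fg_left_ideal_def by blast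
  then have "Opp ` I = Opp ` right_span (unOpp ` G)"
    using left_span_Opp[of "unOpp ` G"] by simp
  then have "I = right_span (unOpp ` G)" by (simp add: inj_image_eq_iff inj_on_def)
  then show "fg_right_ideal I" unfolding fg_right_ideal_def using G by blast
next
  assume "fg_right_ideal I"
  then show "fg_left_ideal (Opp ` I)"
    unfolding fg_left_ideal_def fg_right_ideal_def using left_span_Opp by blast
qed

lemma is_domain_opp: "is_domain TYPE('a::ring_1) \<Longrightarrow> is_domain TYPE('a opp)"
  unfolding is_domain_def by (subst all_opp, subst all_opp) (auto simp: zero_opp_def)

lemma two_sided_denominator_set_opp:
  "two_sided_denominator_set (S :: 'a::ring_1 set) \<Longrightarrow> two_sided_denominator_set (Opp ` S)"
  unfolding two_sided_denominator_set_def
  by (simp add: all_opp ex_opp image_iff zero_opp_def one_opp_def)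

section \<open>Ideals and finitely generated ideals\<close>

lemma left_idealD:
  assumes "left_ideal I"
  shows left_ideal_zero: "0 \<in> I"
    and left_ideal_add: "x \<in> I \<Longrightarrow> y \<in> I \<Longrightarrow> x + y \<in> I"
    and left_ideal_mult: "x \<in> I \<Longrightarrow> a * x \<in> I"
  using assms unfolding left_ideal_def by blast+

lemma right_ideal_mult: "right_ideal I \<Longrightarrow> x \<in> I \<Longrightarrow> x * a \<in> I"
  unfolding right_ideal_def by blast

lemma left_ideal_sum:
  assumes "finite A" "left_ideal K" "\<And>x. x \<in> A \<Longrightarrow> u x \<in> K" shows "sum u A \<in> K"
  using assms(1,3)
proof (induction A rule: finite_induct)
  case empty then show ?case using left_ideal_zero[OF assms(2)] by simp
next
  case (insert x F) then show ?case using left_ideal_add[OF assms(2)] by simp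
qed

lemma left_ideal_left_span: "left_ideal (left_span G)"
  unfolding left_ideal_def left_span_def
proof (intro conjI ballI allI)
  show "0 \<in> {x. \<exists>c. x = (\<Sum>g\<in>G. c g * g)}"
    by (intro CollectI exI[of _ "\<lambda>_. 0"]) simp
next
  fix x y assume "x \<in> {x. \<exists>c. x = (\<Sum>g\<in>G. c g * g)}" "y \<in> {x. \<exists>c. x = (\<Sum>g\<in>G. c g * g)}"
  then obtain c d where "x = (\<Sum>g\<in>G. c g * g)" "y = (\<Sum>g\<in>G. d g * g)" by blast
  then show "x + y \<in> {x. \<exists>c. x = (\<Sum>g\<in>G. c g * g)}"
    by (intro CollectI exI[of _ "\<lambda>g. c g + d g"]) (simp add: sum.distrib distrib_right)
next
  fix a x assume "x \<in> {x. \<exists>c. x = (\<Sum>g\<in>G. c g * g)}"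
  then obtain c where "x = (\<Sum>g\<in>G. c g * g)" by blast
  then show "a * x \<in> {x. \<exists>c. x = (\<Sum>g\<in>G. c g * g)}"
    by (intro CollectI exI[of _ "\<lambda>g. a * c g"]) (simp add: sum_distrib_left mult.assoc)
qed

lemma generators_in_left_span:
  assumes "finite G" "h \<in> G" shows "h \<in> left_span G"
proof -
  have "(\<Sum>g\<in>G. (if g = h then 1 else 0) * g) = (\<Sum>g\<in>G. if g = h then h else 0)"
    by (intro sum.cong) auto
  also have "\<dots> = h" using assms by (simp add: sum.delta)
  finally have "(\<Sum>g\<in>G. (if g = h then 1 else 0) * g) = h" .
  then show ?thesis unfolding left_span_def
    by (intro CollectI exI[of _ "\<lambda>g. if g = h then 1 else 0"]) simp
qed

lemma left_span_least:
  assumes "finite G" "left_ideal K" "G \<subseteq> K" shows "left_span G \<subseteq> K"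
  unfolding left_span_def
proof clarify
  fix c :: "'a \<Rightarrow> 'a"
  show "(\<Sum>g\<in>G. c g * g) \<in> K"
    using assms(1,2) by (rule left_ideal_sum) (use assms left_ideal_mult in blast)
qed

text \<open>The ascending chain condition transfers along a monotone map \<open>c\<close> that is injective
  on the relevant ideals; it will be applied to contraction \<open>J \<mapsto> \<phi>\<^sup>-\<^sup>1(J)\<close>.\<close>

lemma ascending_chain_transfer:
  assumes acc: "\<forall>I :: nat \<Rightarrow> 'a set. (\<forall>n. P (I n)) \<and> mono I \<longrightarrow> (\<exists>n. \<forall>m\<ge>n. I m = I n)"
    and preserved: "\<And>J. Q J \<Longrightarrow> P (c J)"
    and injective: "\<And>J J'. Q J \<Longrightarrow> Q J' \<Longrightarrow> c J = c J' \<Longrightarrow> J = J'"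
    and mono_c: "mono c"
  shows "\<forall>J :: nat \<Rightarrow> 'b set. (\<forall>n. Q (J n)) \<and> mono J \<longrightarrow> (\<exists>n. \<forall>m\<ge>n. J m = J n)"
proof (intro allI impI)
  fix J :: "nat \<Rightarrow> 'b set" assume J: "(\<forall>n. Q (J n)) \<and> mono J"
  then have "(\<forall>n. P (c (J n))) \<and> mono (c \<circ> J)"
    using preserved mono_c unfolding mono_def by simp
  then obtain N where "\<forall>m\<ge>N. c (J m) = c (J N)" using acc[rule_format, of "c \<circ> J"] by auto
  then have "\<forall>m\<ge>N. J m = J N" using J injective by blast
  then show "\<exists>n. \<forall>m\<ge>n. J m = J n" by blast
qed

section \<open>Localization of a domain\<close>

definition unit_inv :: "'b::ring_1 \<Rightarrow> 'b" where
  "unit_inv u = (SOME v. u * v = 1 \<and> v * u = 1)"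

lemma unit_inv: "is_unit u \<Longrightarrow> u * unit_inv u = 1 \<and> unit_inv u * u = 1"
  unfolding unit_inv_def is_unit_def by (rule someI_ex)

locale domain_localization =
  fixes S :: "'a::ring_1 set" and \<phi> :: "'a \<Rightarrow> 'b::ring_1"
  assumes denominators: "two_sided_denominator_set S" and zero_notin_S: "0 \<notin> S"
    and localization: "classical_localization S \<phi>" and domain: "is_domain TYPE('a)"
begin

lemma hom_add [simp]: "\<phi> (x + y) = \<phi> x + \<phi> y"
  and hom_mult [simp]: "\<phi> (x * y) = \<phi> x * \<phi> y"
  and hom_one [simp]: "\<phi> 1 = 1"
  using localization unfolding classical_localization_def ring_hom_def by blast+

lemma hom_zero [simp]: "\<phi> 0 = 0"
proof -
  have "\<phi> 0 = \<phi> 0 + \<phi> 0" by (metis add_0 hom_add)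
  then show ?thesis by simp
qed

lemma hom_diff [simp]: "\<phi> (x - y) = \<phi> x - \<phi> y"
proof -
  have "\<phi> (x - y) + \<phi> y = \<phi> x" by (metis diff_add_cancel hom_add)
  then show ?thesis by (simp add: eq_diff_eq)
qed

lemma no_zero_divisors: "a * b = 0 \<Longrightarrow> a = 0 \<or> b = 0" for a b :: 'a
  using domain unfolding is_domain_def by blast

lemma hom_eq_0_iff [simp]: "\<phi> a = 0 \<longleftrightarrow> a = 0"
proof
  assume "\<phi> a = 0"
  then obtain s where "s \<in> S" "a * s = 0"
    using localization unfolding classical_localization_def by blast
  then show "a = 0" using zero_notin_S no_zero_divisors by fastforce
qed simp

lemma hom_inj: "\<phi> x = \<phi> y \<Longrightarrow> x = y"
  using hom_eq_0_iff[of "x - y"] by simp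

lemma one_in_S: "1 \<in> S"
  and mult_in_S: "s \<in> S \<Longrightarrow> t \<in> S \<Longrightarrow> s * t \<in> S"
  and left_ore: "s \<in> S \<Longrightarrow> \<exists>b. \<exists>t\<in>S. t * a = b * s"
  using denominators unfolding two_sided_denominator_set_def by blast+

lemma left_fraction: "\<exists>a. \<exists>s\<in>S. \<phi> s * b = \<phi> a"
  and right_fraction: "\<exists>a. \<exists>s\<in>S. b * \<phi> s = \<phi> a"
  using localization unfolding classical_localization_def by blast+

lemma inverse_S: "s \<in> S \<Longrightarrow> \<phi> s * unit_inv (\<phi> s) = 1 \<and> unit_inv (\<phi> s) * \<phi> s = 1"
  using localization unit_inv unfolding classical_localization_def by blast

lemma unit_inv_cancel [simp]:
  assumes "s \<in> S"
  shows "unit_inv (\<phi> s) * (\<phi> s * x) = x" "\<phi> s * (unit_inv (\<phi> s) * x) = x"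
    "x * \<phi> s * unit_inv (\<phi> s) = x" "x * unit_inv (\<phi> s) * \<phi> s = x"
  using inverse_S[OF assms]
  by (simp_all add: mult.assoc[symmetric]) (simp_all add: mult.assoc)

lemma solve_left: "s \<in> S \<Longrightarrow> \<phi> s * b = c \<Longrightarrow> b = unit_inv (\<phi> s) * c"
  and solve_right: "s \<in> S \<Longrightarrow> b * \<phi> s = c \<Longrightarrow> b = c * unit_inv (\<phi> s)"
  by auto

lemma cancel_left: "s \<in> S \<Longrightarrow> \<phi> s * x = \<phi> s * y \<Longrightarrow> x = y"
  by (metis solve_left)

text \<open>Left Ore condition in its multiplicative form: two denominators have a common left multiple.\<close>
lemma common_multiple:
  assumes "s \<in> S" "s' \<in> S" obtains u x x' where "u \<in> S" "u = x * s" "u = x' * s'"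
proof -
  obtain b t where "t \<in> S" "t * s = b * s'" using left_ore[OF assms(2)] by blast
  moreover have "t * s \<in> S" using \<open>t \<in> S\<close> assms(1) by (rule mult_in_S)
  ultimately show ?thesis by (intro that[of "t * s" t b]) simp_all
qed

lemma common_multiple_family:
  "(\<forall>i<(n::nat). s i \<in> S) \<Longrightarrow> \<exists>u\<in>S. \<exists>x. \<forall>i<n. u = x i * s i"
proof (induction n)
  case 0 then show ?case using one_in_S by auto
next
  case (Suc n)
  then obtain u x where u: "u \<in> S" "\<forall>i<n. u = x i * s i" by auto
  obtain u' y y' where u': "u' \<in> S" "u' = y * u" "u' = y' * s n"
    using common_multiple[OF u(1), of "s n"] Suc.prems by blast
  have "\<forall>i<Suc n. u' = (if i < n then y * x i else y') * s i"
    using u u' by (auto simp: mult.assoc less_Suc_eq)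
  then show ?case using u'(1) by (intro bexI[of _ u'] exI[of _ "\<lambda>i. if i < n then y * x i else y'"])
qed

lemma vector_left_fraction:
  assumes v: "v \<in> vecs n"
  obtains s c where "s \<in> S" "c \<in> vecs n" "\<And>k. \<phi> s * v k = \<phi> (c k)"
proof -
  have "\<forall>k. \<exists>s c. s \<in> S \<and> \<phi> s * v k = \<phi> c" using left_fraction by metis
  then obtain sv cv where sv: "\<And>k. sv k \<in> S" "\<And>k. \<phi> (sv k) * v k = \<phi> (cv k)"
    by metis
  obtain u x where u: "u \<in> S" "\<forall>i<n. u = x i * sv i"
    using common_multiple_family[of n sv] sv(1) by blast
  define c where "c k = (if k < n then x k * cv k else 0)" for k
  have "\<phi> u * v k = \<phi> (c k)" for k
    using u sv v by (cases "k < n") (simp_all add: c_def mult.assoc vecs_def)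
  moreover have "c \<in> vecs n" by (simp add: c_def vecs_def)
  ultimately show ?thesis using that u(1) by blast
qed

lemma unit_inv_rescale:
  assumes "s \<in> S" "u \<in> S" "u = x * s"
  shows "unit_inv (\<phi> s) = unit_inv (\<phi> u) * \<phi> x"
proof -
  have "unit_inv (\<phi> u) * \<phi> x * \<phi> s = 1" using assms inverse_S[of u] by (simp add: mult.assoc)
  then show ?thesis using assms(1) by (metis mult_1 unit_inv_cancel(3))
qed

definition extension :: "'a set \<Rightarrow> 'b set" where
  "extension I = {b. \<exists>s\<in>S. \<exists>a\<in>I. \<phi> s * b = \<phi> a}"

lemma left_ideal_extension:
  assumes I: "left_ideal I" shows "left_ideal (extension I)"
  unfolding left_ideal_def
proof (intro conjI ballI allI)
  show "0 \<in> extension I"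
    unfolding extension_def using one_in_S left_ideal_zero[OF I] by force
next
  fix x y assume "x \<in> extension I" "y \<in> extension I"
  then obtain s a s' a' where sa: "s \<in> S" "a \<in> I" "\<phi> s * x = \<phi> a"
    and sa': "s' \<in> S" "a' \<in> I" "\<phi> s' * y = \<phi> a'"
    unfolding extension_def by blast
  obtain u z z' where u: "u \<in> S" "u = z * s" "u = z' * s'"
    using common_multiple[OF sa(1) sa'(1)] .
  have "\<phi> u * x = \<phi> (z * a)" by (simp add: u(2) mult.assoc sa(3))
  moreover have "\<phi> u * y = \<phi> (z' * a')" by (simp add: u(3) mult.assoc sa'(3))
  ultimately have "\<phi> u * (x + y) = \<phi> (z * a + z' * a')" by (simp add: distrib_left)
  moreover have "z * a + z' * a' \<in> I"
    using I sa(2) sa'(2) by (intro left_ideal_add left_ideal_mult)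
  ultimately show "x + y \<in> extension I" unfolding extension_def using u(1) by blast
next
  fix \<beta> x assume "x \<in> extension I"
  then obtain s a where sa: "s \<in> S" "a \<in> I" "\<phi> s * x = \<phi> a" unfolding extension_def by blast
  obtain y t where t: "t \<in> S" "\<phi> t * (\<beta> * unit_inv (\<phi> s)) = \<phi> y" using left_fraction by blast
  have "\<phi> t * (\<beta> * x) = \<phi> (y * a)"
    using t sa solve_left[OF sa(1,3)] by (simp add: mult.assoc[symmetric])
  then show "\<beta> * x \<in> extension I"
    unfolding extension_def using t(1) left_ideal_mult[OF I sa(2)] by blast
qed

lemma left_ideal_contraction: "left_ideal J \<Longrightarrow> left_ideal (\<phi> -` J)"
  unfolding left_ideal_def by auto

lemma right_ideal_contraction: "right_ideal J \<Longrightarrow> right_ideal (\<phi> -` J)"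
  unfolding right_ideal_def by auto

lemma extension_contraction:
  assumes J: "left_ideal J" shows "extension (\<phi> -` J) = J"
proof (intro equalityI subsetI)
  fix b assume "b \<in> extension (\<phi> -` J)"
  then obtain s a where "s \<in> S" "\<phi> a \<in> J" "\<phi> s * b = \<phi> a" unfolding extension_def by blast
  then show "b \<in> J" using solve_left left_ideal_mult[OF J] by metis
next
  fix b assume "b \<in> J"
  obtain a s where s: "s \<in> S" "\<phi> s * b = \<phi> a" using left_fraction by blast
  then have "a \<in> \<phi> -` J" using left_ideal_mult[OF J \<open>b \<in> J\<close>, of "\<phi> s"] by simp
  then show "b \<in> extension (\<phi> -` J)" unfolding extension_def using s by blast
qed

lemma extension_mono: "I \<subseteq> I' \<Longrightarrow> extension I \<subseteq> extension I'"
  unfolding extension_def by blast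

lemma right_ideal_contraction_inj:
  assumes J: "right_ideal J" and J': "right_ideal J'" and eq: "\<phi> -` J = \<phi> -` J'"
  shows "J = J'"
proof -
  have "J1 \<subseteq> J2" if J1: "right_ideal J1" and J2: "right_ideal J2" and eq: "\<phi> -` J1 = \<phi> -` J2"
    for J1 J2
  proof
    fix b assume "b \<in> J1"
    obtain a s where s: "s \<in> S" "b * \<phi> s = \<phi> a" using right_fraction by blast
    then have "\<phi> a \<in> J1" using right_ideal_mult[OF J1 \<open>b \<in> J1\<close>, of "\<phi> s"] by simp
    then have "\<phi> a \<in> J2" using eq unfolding set_eq_iff vimage_eq by blast
    then show "b \<in> J2" using solve_right[OF s] right_ideal_mult[OF J2] by simp
  qed
  from this[OF J J' eq] this[OF J' J eq[symmetric]] show ?thesis by (rule equalityI)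
qed

text \<open>The ring-theoretic conditions other than stable freeness transfer by clearing
  denominators on the left or on the right.\<close>

lemma is_domain_localization: "is_domain TYPE('b)"
  unfolding is_domain_def
proof (intro allI impI)
  fix b1 b2 :: 'b assume prod: "b1 * b2 = 0"
  obtain a1 s1 where s1: "s1 \<in> S" "\<phi> s1 * b1 = \<phi> a1" using left_fraction by blast
  obtain a2 s2 where s2: "s2 \<in> S" "b2 * \<phi> s2 = \<phi> a2" using right_fraction by blast
  have "\<phi> (a1 * a2) = (\<phi> s1 * b1) * (b2 * \<phi> s2)" using s1 s2 by simp
  also have "\<dots> = \<phi> s1 * (b1 * b2) * \<phi> s2" by (simp add: mult.assoc)
  finally have "\<phi> (a1 * a2) = 0" using prod by simp
  then have "a1 = 0 \<or> a2 = 0" using no_zero_divisors by (simp del: hom_mult)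
  moreover have "b1 = unit_inv (\<phi> s1) * \<phi> a1" "b2 = \<phi> a2 * unit_inv (\<phi> s2)"
    using solve_left[OF s1] solve_right[OF s2] .
  ultimately show "b1 = 0 \<or> b2 = 0" by auto
qed

lemma left_noetherian_localization:
  assumes "left_noetherian TYPE('a)" shows "left_noetherian TYPE('b)"
  using assms unfolding left_noetherian_def
proof (rule ascending_chain_transfer[where c = "vimage \<phi>"])
  show "\<And>J J'. left_ideal J \<Longrightarrow> left_ideal J' \<Longrightarrow> \<phi> -` J = \<phi> -` J' \<Longrightarrow> J = J'"
    by (metis extension_contraction)
qed (simp_all add: left_ideal_contraction mono_def vimage_mono)

lemma right_noetherian_localization:
  assumes "right_noetherian TYPE('a)" shows "right_noetherian TYPE('b)"
  using assms unfolding right_noetherian_def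
  by (rule ascending_chain_transfer[where c = "vimage \<phi>"])
    (simp_all add: right_ideal_contraction right_ideal_contraction_inj mono_def vimage_mono)

lemma left_ore_localization:
  assumes ore: "\<forall>a b :: 'a. a \<noteq> 0 \<and> b \<noteq> 0 \<longrightarrow> (\<exists>x y. x * a = y * b \<and> x * a \<noteq> 0)"
  shows "\<forall>a b :: 'b. a \<noteq> 0 \<and> b \<noteq> 0 \<longrightarrow> (\<exists>x y. x * a = y * b \<and> x * a \<noteq> 0)"
proof (intro allI impI)
  fix b1 b2 :: 'b assume nz: "b1 \<noteq> 0 \<and> b2 \<noteq> 0"
  obtain a1 s1 where s1: "s1 \<in> S" "\<phi> s1 * b1 = \<phi> a1" using left_fraction by blast
  obtain a2 s2 where s2: "s2 \<in> S" "\<phi> s2 * b2 = \<phi> a2" using left_fraction by blast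
  have "a1 \<noteq> 0" "a2 \<noteq> 0" using nz solve_left[OF s1] solve_left[OF s2] by auto
  then obtain x y where xy: "x * a1 = y * a2" "x * a1 \<noteq> 0" using ore by blast
  have "(\<phi> x * \<phi> s1) * b1 = \<phi> (x * a1)" "(\<phi> y * \<phi> s2) * b2 = \<phi> (y * a2)"
    using s1 s2 by (simp_all add: mult.assoc)
  then have "(\<phi> x * \<phi> s1) * b1 = (\<phi> y * \<phi> s2) * b2 \<and> (\<phi> x * \<phi> s1) * b1 \<noteq> 0"
    using xy by (simp del: hom_mult)
  then show "\<exists>x y. x * b1 = y * b2 \<and> x * b1 \<noteq> 0" by blast
qed

lemma right_ore_localization:
  assumes ore: "\<forall>a b :: 'a. a \<noteq> 0 \<and> b \<noteq> 0 \<longrightarrow> (\<exists>x y. a * x = b * y \<and> a * x \<noteq> 0)"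
  shows "\<forall>a b :: 'b. a \<noteq> 0 \<and> b \<noteq> 0 \<longrightarrow> (\<exists>x y. a * x = b * y \<and> a * x \<noteq> 0)"
proof (intro allI impI)
  fix b1 b2 :: 'b assume nz: "b1 \<noteq> 0 \<and> b2 \<noteq> 0"
  obtain a1 s1 where s1: "s1 \<in> S" "b1 * \<phi> s1 = \<phi> a1" using right_fraction by blast
  obtain a2 s2 where s2: "s2 \<in> S" "b2 * \<phi> s2 = \<phi> a2" using right_fraction by blast
  have "a1 \<noteq> 0" "a2 \<noteq> 0" using nz solve_right[OF s1] solve_right[OF s2] by auto
  then obtain x y where xy: "a1 * x = a2 * y" "a1 * x \<noteq> 0" using ore by blast
  have "b1 * (\<phi> s1 * \<phi> x) = \<phi> (a1 * x)" "b2 * (\<phi> s2 * \<phi> y) = \<phi> (a2 * y)"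
    using s1 s2 by (simp_all add: mult.assoc[symmetric])
  then have "b1 * (\<phi> s1 * \<phi> x) = b2 * (\<phi> s2 * \<phi> y) \<and> b1 * (\<phi> s1 * \<phi> x) \<noteq> 0"
    using xy by (simp del: hom_mult)
  then show "\<exists>x y. b1 * x = b2 * y \<and> b1 * x \<noteq> 0" by blast
qed

end

section \<open>Extending a stably free presentation\<close>

locale left_presentation = domain_localization S \<phi>
  for S :: "'a::ring_1 set" and \<phi> :: "'a \<Rightarrow> 'b::ring_1" +
  fixes I :: "'a set" and q r :: nat and f :: "'a \<times> (nat \<Rightarrow> 'a) \<Rightarrow> nat \<Rightarrow> 'a"
  assumes I: "left_ideal I"
    and f_bij: "bij_betw f (I \<times> vecs q) (vecs (q + r))"
    and f_add: "\<And>a c a' c'. a \<in> I \<Longrightarrow> c \<in> vecs q \<Longrightarrow> a' \<in> I \<Longrightarrow> c' \<in> vecs q \<Longrightarrow>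
      f (a + a', \<lambda>k. c k + c' k) = (\<lambda>k. f (a, c) k + f (a', c') k)"
    and f_scale: "\<And>x a c. a \<in> I \<Longrightarrow> c \<in> vecs q \<Longrightarrow>
      f (x * a, \<lambda>k. x * c k) = (\<lambda>k. x * f (a, c) k)"
begin

text \<open>\<open>represents s a c b v\<close>: the pair \<open>(b, v) \<in> S\<^sup>-\<^sup>1I \<oplus> B\<^sup>q\<close> is the fraction \<open>s\<^sup>-\<^sup>1 (a, c)\<close>.
  The extended map sends it to \<open>s\<^sup>-\<^sup>1 f(a, c)\<close>.\<close>

definition represents :: "'a \<Rightarrow> 'a \<Rightarrow> (nat \<Rightarrow> 'a) \<Rightarrow> 'b \<Rightarrow> (nat \<Rightarrow> 'b) \<Rightarrow> bool" where
  "represents s a c b v \<longleftrightarrow> s \<in> S \<and> a \<in> I \<and> c \<in> vecs q \<and>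
     \<phi> s * b = \<phi> a \<and> (\<forall>k. \<phi> s * v k = \<phi> (c k))"

definition frac_image :: "'a \<Rightarrow> 'a \<Rightarrow> (nat \<Rightarrow> 'a) \<Rightarrow> nat \<Rightarrow> 'b" where
  "frac_image s a c = (\<lambda>k. unit_inv (\<phi> s) * \<phi> (f (a, c) k))"

definition ext_map :: "'b \<times> (nat \<Rightarrow> 'b) \<Rightarrow> nat \<Rightarrow> 'b" where
  "ext_map p = (SOME w. \<exists>s a c. represents s a c (fst p) (snd p) \<and> w = frac_image s a c)"

lemma represents_exists:
  assumes b: "b \<in> extension I" and v: "v \<in> vecs q"
  obtains s a c where "represents s a c b v"
proof -
  obtain s0 a0 where s0: "s0 \<in> S" "a0 \<in> I" "\<phi> s0 * b = \<phi> a0"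
    using b unfolding extension_def by blast
  obtain s1 c1 where s1: "s1 \<in> S" "c1 \<in> vecs q" "\<And>k. \<phi> s1 * v k = \<phi> (c1 k)"
    using vector_left_fraction[OF v] by blast
  obtain u x0 x1 where u: "u \<in> S" "u = x0 * s0" "u = x1 * s1"
    using common_multiple[OF s0(1) s1(1)] .
  have "\<phi> u * b = \<phi> (x0 * a0)" by (simp add: u(2) mult.assoc s0(3))
  moreover have "\<phi> u * v k = \<phi> (x1 * c1 k)" for k by (simp add: u(3) mult.assoc s1(3))
  moreover have "x0 * a0 \<in> I" using I s0(2) by (rule left_ideal_mult)
  moreover have "(\<lambda>k. x1 * c1 k) \<in> vecs q" using s1(2) by (simp add: vecs_def)
  ultimately have "represents u (x0 * a0) (\<lambda>k. x1 * c1 k) b v"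
    unfolding represents_def using u(1) by blast
  then show ?thesis by (rule that)
qed

lemma represents_rescale:
  assumes "represents s a c b v" "u \<in> S" "u = x * s"
  shows "represents u (x * a) (\<lambda>k. x * c k) b v"
  using assms left_ideal_mult[OF I] unfolding represents_def vecs_def by (auto simp: mult.assoc)

lemma represents_common:
  assumes "represents s a c b v" "represents s' a' c' b' v'"
  obtains u x x' where "represents u (x * a) (\<lambda>k. x * c k) b v"
    "represents u (x' * a') (\<lambda>k. x' * c' k) b' v'"
proof -
  have "s \<in> S" "s' \<in> S" using assms unfolding represents_def by simp_all
  then obtain u x x' where u: "u \<in> S" "u = x * s" "u = x' * s'" by (rule common_multiple)
  show ?thesis by (rule that[OF represents_rescale[OF assms(1) u(1,2)] represents_rescale[OF assms(2) u(1,3)]])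
qed

text \<open>With a fixed denominator the numerators are unique, since \<open>\<phi>\<close> is injective.\<close>
lemma represents_unique:
  assumes "represents u a c b v" "represents u a' c' b v"
  shows "a = a'" "c = c'"
proof -
  have "\<phi> a = \<phi> a'" "\<And>k. \<phi> (c k) = \<phi> (c' k)" using assms unfolding represents_def by auto
  then show "a = a'" "c = c'" by (auto intro: hom_inj)
qed

lemma frac_image_rescale:
  assumes "represents s a c b v" "u \<in> S" "u = x * s"
  shows "frac_image u (x * a) (\<lambda>k. x * c k) = frac_image s a c"
proof
  fix k
  have s: "s \<in> S" "a \<in> I" "c \<in> vecs q" using assms(1) unfolding represents_def by auto
  have "frac_image u (x * a) (\<lambda>k. x * c k) k = unit_inv (\<phi> u) * \<phi> x * \<phi> (f (a, c) k)"
    unfolding frac_image_def using f_scale[OF s(2,3)] by (simp add: mult.assoc)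
  also have "\<dots> = frac_image s a c k"
    unfolding frac_image_def using unit_inv_rescale[OF s(1) assms(2,3)] by simp
  finally show "frac_image u (x * a) (\<lambda>k. x * c k) k = frac_image s a c k" .
qed

lemma frac_image_well_defined:
  assumes "represents s a c b v" "represents s' a' c' b v"
  shows "frac_image s a c = frac_image s' a' c'"
proof -
  have "s \<in> S" "s' \<in> S" using assms unfolding represents_def by simp_all
  then obtain u x x' where u: "u \<in> S" "u = x * s" "u = x' * s'" by (rule common_multiple)
  note r = represents_rescale[OF assms(1) u(1,2)] represents_rescale[OF assms(2) u(1,3)]
  show ?thesis
    using frac_image_rescale[OF assms(1) u(1,2)] frac_image_rescale[OF assms(2) u(1,3)]
      represents_unique[OF r] by simp
qed

lemma ext_map_eq:
  assumes r: "represents s a c b v" shows "ext_map (b, v) = frac_image s a c"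
  unfolding ext_map_def
proof (rule someI2[where a = "frac_image s a c"])
  show "\<exists>s' a' c'. represents s' a' c' (fst (b, v)) (snd (b, v)) \<and> frac_image s a c = frac_image s' a' c'"
    using r by auto
next
  fix w assume "\<exists>s' a' c'. represents s' a' c' (fst (b, v)) (snd (b, v)) \<and> w = frac_image s' a' c'"
  then show "w = frac_image s a c" using frac_image_well_defined[OF r] by auto
qed

lemma f_in_vecs: "a \<in> I \<Longrightarrow> c \<in> vecs q \<Longrightarrow> f (a, c) \<in> vecs (q + r)"
  using f_bij unfolding bij_betw_def by blast

lemma ext_map_inj: "inj_on ext_map (extension I \<times> vecs q)"
proof (rule inj_onI, clarify)
  fix b v b' v' assume mem: "b \<in> extension I" "v \<in> vecs q" "b' \<in> extension I" "v' \<in> vecs q"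
    and eq: "ext_map (b, v) = ext_map (b', v')"
  obtain s a c s' a' c' where "represents s a c b v" "represents s' a' c' b' v'"
    using represents_exists[OF mem(1,2)] represents_exists[OF mem(3,4)] by metis
  then obtain u a c a' c' where r: "represents u a c b v" "represents u a' c' b' v'"
    by (rule represents_common)
  have u: "u \<in> S" and ac: "(a, c) \<in> I \<times> vecs q" "(a', c') \<in> I \<times> vecs q"
    using r unfolding represents_def by auto
  have "frac_image u a c = frac_image u a' c'" using eq ext_map_eq[OF r(1)] ext_map_eq[OF r(2)] by simp
  then have "\<phi> (f (a, c) k) = \<phi> (f (a', c') k)" for k
    unfolding frac_image_def by (metis u unit_inv_cancel(2))
  then have "f (a, c) = f (a', c')" using hom_inj by blast
  then have "a = a'" "c = c'" using f_bij ac unfolding bij_betw_def inj_on_def by blast+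
  then have "\<phi> u * b = \<phi> u * b'" "\<And>k. \<phi> u * v k = \<phi> u * v' k"
    using r unfolding represents_def by auto
  then show "b = b' \<and> v = v'" using cancel_left[OF u] by blast
qed

lemma ext_map_image: "ext_map ` (extension I \<times> vecs q) = vecs (q + r)"
proof (intro equalityI subsetI)
  fix w assume "w \<in> ext_map ` (extension I \<times> vecs q)"
  then obtain b v where mem: "b \<in> extension I" "v \<in> vecs q" and w: "w = ext_map (b, v)" by blast
  obtain s a c where rep: "represents s a c b v" using represents_exists[OF mem] .
  then have "f (a, c) \<in> vecs (q + r)" using f_in_vecs unfolding represents_def by blast
  then show "w \<in> vecs (q + r)" using w ext_map_eq[OF rep] by (simp add: frac_image_def vecs_def)
next
  fix w :: "nat \<Rightarrow> 'b" assume w: "w \<in> vecs (q + r)"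
  obtain u d where ud: "u \<in> S" "d \<in> vecs (q + r)" "\<And>k. \<phi> u * w k = \<phi> (d k)"
    using vector_left_fraction[OF w] by blast
  have "d \<in> f ` (I \<times> vecs q)" using ud(2) f_bij unfolding bij_betw_def by simp
  then obtain a c where ac: "a \<in> I" "c \<in> vecs q" "f (a, c) = d" by auto
  define b where "b = unit_inv (\<phi> u) * \<phi> a"
  define v where "v k = unit_inv (\<phi> u) * \<phi> (c k)" for k
  have rep: "represents u a c b v" unfolding represents_def b_def v_def using ud(1) ac by simp
  then have "b \<in> extension I" unfolding represents_def extension_def by blast
  moreover have "v \<in> vecs q" using ac(2) unfolding v_def vecs_def by simp
  moreover have "ext_map (b, v) = w"
    using ext_map_eq[OF rep] ac(3) solve_left[OF ud(1,3)] by (simp add: frac_image_def fun_eq_iff)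
  ultimately show "w \<in> ext_map ` (extension I \<times> vecs q)" by (intro rev_image_eqI[of "(b, v)"]) simp_all
qed

lemma ext_map_add:
  assumes "b \<in> extension I" "v \<in> vecs q" "b' \<in> extension I" "v' \<in> vecs q"
  shows "ext_map (b + b', \<lambda>k. v k + v' k) = (\<lambda>k. ext_map (b, v) k + ext_map (b', v') k)"
proof -
  obtain s a c s' a' c' where "represents s a c b v" "represents s' a' c' b' v'"
    using represents_exists[OF assms(1,2)] represents_exists[OF assms(3,4)] by metis
  then obtain u a c a' c' where r: "represents u a c b v" "represents u a' c' b' v'"
    by (rule represents_common)
  have sum: "represents u (a + a') (\<lambda>k. c k + c' k) (b + b') (\<lambda>k. v k + v' k)"
    using r left_ideal_add[OF I] unfolding represents_def vecs_def by (auto simp: distrib_left)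
  have "f (a + a', \<lambda>k. c k + c' k) = (\<lambda>k. f (a, c) k + f (a', c') k)"
    using r f_add unfolding represents_def by blast
  then show ?thesis
    using ext_map_eq[OF sum] ext_map_eq[OF r(1)] ext_map_eq[OF r(2)]
    by (simp add: frac_image_def distrib_left)
qed

lemma ext_map_scale:
  assumes "b \<in> extension I" "v \<in> vecs q"
  shows "ext_map (\<beta> * b, \<lambda>k. \<beta> * v k) = (\<lambda>k. \<beta> * ext_map (b, v) k)"
proof -
  obtain s a c where r: "represents s a c b v" using represents_exists[OF assms] .
  then have s: "s \<in> S" "a \<in> I" "c \<in> vecs q" unfolding represents_def by auto
  obtain y t where t: "t \<in> S" "\<phi> t * (\<beta> * unit_inv (\<phi> s)) = \<phi> y"
    using left_fraction by blast
  have y: "unit_inv (\<phi> t) * \<phi> y = \<beta> * unit_inv (\<phi> s)" using solve_left[OF t] by simp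
  have t': "\<phi> t * \<beta> * unit_inv (\<phi> s) = \<phi> y" using t(2) by (simp add: mult.assoc)
  have "b = unit_inv (\<phi> s) * \<phi> a" "\<And>k. v k = unit_inv (\<phi> s) * \<phi> (c k)"
    using r unfolding represents_def by (blast intro: solve_left)+
  then have "\<phi> t * (\<beta> * b) = \<phi> (y * a)" "\<And>k. \<phi> t * (\<beta> * v k) = \<phi> (y * c k)"
    by (simp_all add: mult.assoc[symmetric] t')
  then have r': "represents t (y * a) (\<lambda>k. y * c k) (\<beta> * b) (\<lambda>k. \<beta> * v k)"
    using t(1) s(2,3) left_ideal_mult[OF I] unfolding represents_def vecs_def by simp
  show ?thesis
    using ext_map_eq[OF r'] ext_map_eq[OF r] f_scale[OF s(2,3)] y
    by (simp add: frac_image_def mult.assoc[symmetric])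
qed

lemma stably_free_left_extension: "stably_free_left (extension I)"
proof -
  have "bij_betw ext_map (extension I \<times> vecs q) (vecs (q + r))"
    using ext_map_inj ext_map_image by (simp add: bij_betw_def)
  moreover have "\<forall>x\<in>extension I \<times> vecs q. \<forall>y\<in>extension I \<times> vecs q.
      ext_map (fst x + fst y, \<lambda>k. snd x k + snd y k) = (\<lambda>k. ext_map x k + ext_map y k)"
    using ext_map_add by auto
  moreover have "\<forall>\<beta>. \<forall>x\<in>extension I \<times> vecs q.
      ext_map (\<beta> * fst x, \<lambda>k. \<beta> * snd x k) = (\<lambda>k. \<beta> * ext_map x k)"
    using ext_map_scale by auto
  ultimately show ?thesis unfolding stably_free_left_def by blast
qed

end

section \<open>Transfer of stable freeness\<close>

context domain_localization
begin

lemma stably_free_extension: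
  assumes I: "left_ideal I" and sf: "stably_free_left I"
  shows "stably_free_left (extension I)"
proof -
  obtain q r f where "bij_betw f (I \<times> vecs q) (vecs (q + r))"
    and "\<forall>x\<in>I \<times> vecs q. \<forall>y\<in>I \<times> vecs q.
        f (fst x + fst y, \<lambda>k. snd x k + snd y k) = (\<lambda>k. f x k + f y k)"
    and "\<forall>a. \<forall>x\<in>I \<times> vecs q. f (a * fst x, \<lambda>k. a * snd x k) = (\<lambda>k. a * f x k)"
    using sf unfolding stably_free_left_def by blast
  then interpret left_presentation S \<phi> I q r f
    using I by unfold_locales auto
  show ?thesis by (rule stably_free_left_extension)
qed

lemma left_ideals_stably_free_localization:
  assumes "\<forall>I :: 'a set. left_ideal I \<longrightarrow> stably_free_left I"
  shows "\<forall>J :: 'b set. left_ideal J \<longrightarrow> stably_free_left J"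
proof (intro allI impI)
  fix J :: "'b set" assume J: "left_ideal J"
  have "stably_free_left (extension (\<phi> -` J))"
    using assms left_ideal_contraction[OF J] by (blast intro: stably_free_extension)
  then show "stably_free_left J" by (simp only: extension_contraction[OF J])
qed

lemma left_span_extension:
  assumes G: "finite G"
  obtains I where "fg_left_ideal I" "left_ideal I" "extension I = left_span G"
proof -
  have "\<forall>g. \<exists>s a. s \<in> S \<and> \<phi> s * g = \<phi> a" using left_fraction by metis
  then obtain sg ag where sg: "\<And>g. sg g \<in> S" "\<And>g. \<phi> (sg g) * g = \<phi> (ag g)" by metis
  define I where "I = left_span (ag ` G)"
  have I: "left_ideal I" unfolding I_def by (rule left_ideal_left_span)
  have J: "left_ideal (left_span G)" by (rule left_ideal_left_span)
  have "ag g \<in> \<phi> -` left_span G" if "g \<in> G" for g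
    using left_ideal_mult[OF J generators_in_left_span[OF G that], of "\<phi> (sg g)"] sg(2)[of g] by simp
  then have "I \<subseteq> \<phi> -` left_span G"
    unfolding I_def using G left_ideal_contraction[OF J] by (intro left_span_least) auto
  then have "extension I \<subseteq> left_span G"
    using extension_mono extension_contraction[OF J] by blast
  moreover have "g \<in> extension I" if "g \<in> G" for g
    using sg generators_in_left_span[of "ag ` G" "ag g"] G that
    unfolding extension_def I_def by blast
  then have "left_span G \<subseteq> extension I"
    using G left_ideal_extension[OF I] by (intro left_span_least) auto
  moreover have "fg_left_ideal I" unfolding fg_left_ideal_def I_def using G by blast
  ultimately show ?thesis using that I by blast
qed

lemma fg_left_ideals_stably_free_localization:
  assumes "\<forall>I :: 'a set. fg_left_ideal I \<longrightarrow> stably_free_left I"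
  shows "\<forall>J :: 'b set. fg_left_ideal J \<longrightarrow> stably_free_left J"
proof (intro allI impI)
  fix J :: "'b set" assume "fg_left_ideal J"
  then obtain G where G: "finite G" "J = left_span G" unfolding fg_left_ideal_def by blast
  obtain I where "fg_left_ideal I" "left_ideal I" "extension I = J"
    using left_span_extension[OF G(1)] G(2) by metis
  then show "stably_free_left J" using assms stably_free_extension by metis
qed

lemma opposite_localization: "domain_localization (Opp ` S) (\<lambda>x. Opp (\<phi> (unOpp x)))"
proof
  show "two_sided_denominator_set (Opp ` S)" by (rule two_sided_denominator_set_opp[OF denominators])
  show "0 \<notin> Opp ` S" using zero_notin_S by (auto simp: zero_opp_def)
  show "is_domain TYPE('a opp)" by (rule is_domain_opp[OF domain])
  have unit: "is_unit (Opp (\<phi> s))" if "s \<in> S" for s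
    unfolding is_unit_def using inverse_S[OF that]
    by (intro exI[of _ "Opp (unit_inv (\<phi> s))"]) simp
  have "\<exists>a. \<exists>s\<in>Opp ` S. b * Opp (\<phi> (unOpp s)) = Opp (\<phi> (unOpp a))" for b :: "'b opp"
  proof -
    obtain a s where "s \<in> S" "\<phi> s * unOpp b = \<phi> a" using left_fraction by blast
    then show ?thesis by (intro exI[of _ "Opp a"] bexI[of _ "Opp s"]) (auto simp: times_opp_def)
  qed
  moreover have "\<exists>a. \<exists>s\<in>Opp ` S. Opp (\<phi> (unOpp s)) * b = Opp (\<phi> (unOpp a))" for b :: "'b opp"
  proof -
    obtain a s where "s \<in> S" "unOpp b * \<phi> s = \<phi> a" using right_fraction by blast
    then show ?thesis by (intro exI[of _ "Opp a"] bexI[of _ "Opp s"]) (auto simp: times_opp_def)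
  qed
  moreover have "Opp (\<phi> (unOpp a)) = 0 \<longleftrightarrow> (\<exists>s\<in>Opp ` S. a * s = 0)" for a :: "'a opp"
  proof -
    have "(\<exists>s\<in>Opp ` S. a * s = 0) \<longleftrightarrow> unOpp a = 0"
      using zero_notin_S one_in_S no_zero_divisors
      by (auto simp: times_opp_def zero_opp_def opp.expand)
    then show ?thesis by simp
  qed
  ultimately show "classical_localization (Opp ` S) (\<lambda>x. Opp (\<phi> (unOpp x)))"
    unfolding classical_localization_def ring_hom_def using unit by auto
qed

text \<open>The right-handed statements follow by applying the left-handed ones to the
  localization of the opposite rings.\<close>

lemma right_ideals_stably_free_localization:
  assumes "\<forall>I :: 'a set. right_ideal I \<longrightarrow> stably_free_right I"
  shows "\<forall>J :: 'b set. right_ideal J \<longrightarrow> stably_free_right J"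
proof -
  interpret opposite: domain_localization "Opp ` S" "\<lambda>x. Opp (\<phi> (unOpp x))"
    by (rule opposite_localization)
  have "\<forall>I :: 'a opp set. left_ideal I \<longrightarrow> stably_free_left I"
  proof (intro allI impI)
    fix I :: "'a opp set" assume "left_ideal I"
    then show "stably_free_left I"
      using assms left_ideal_Opp_iff[of "unOpp ` I"] stably_free_left_Opp_iff[of "unOpp ` I"] by simp
  qed
  then have "\<forall>J :: 'b opp set. left_ideal J \<longrightarrow> stably_free_left J"
    by (rule opposite.left_ideals_stably_free_localization)
  then show ?thesis using left_ideal_Opp_iff stably_free_left_Opp_iff by blast
qed

lemma fg_right_ideals_stably_free_localization:
  assumes "\<forall>I :: 'a set. fg_right_ideal I \<longrightarrow> stably_free_right I"
  shows "\<forall>J :: 'b set. fg_right_ideal J \<longrightarrow> stably_free_right J"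
proof -
  interpret opposite: domain_localization "Opp ` S" "\<lambda>x. Opp (\<phi> (unOpp x))"
    by (rule opposite_localization)
  have "\<forall>I :: 'a opp set. fg_left_ideal I \<longrightarrow> stably_free_left I"
  proof (intro allI impI)
    fix I :: "'a opp set" assume "fg_left_ideal I"
    then show "stably_free_left I"
      using assms fg_left_ideal_Opp_iff[of "unOpp ` I"] stably_free_left_Opp_iff[of "unOpp ` I"] by simp
  qed
  then have "\<forall>J :: 'b opp set. fg_left_ideal J \<longrightarrow> stably_free_left J"
    by (rule opposite.fg_left_ideals_stably_free_localization)
  then show ?thesis using fg_left_ideal_Opp_iff stably_free_left_Opp_iff by blast
qed

end

theorem mainTheorem10:
  fixes S :: "'a::ring_1 set" and \<phi> :: "'a \<Rightarrow> 'b::ring_1"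
  assumes "two_sided_denominator_set S" and "0 \<notin> S"
    and "classical_localization S \<phi>"
  shows "(stably_free_ideal_domain TYPE('a) \<longrightarrow> stably_free_ideal_domain TYPE('b)) \<and>
         (semistably_free_ideal_domain TYPE('a) \<longrightarrow> semistably_free_ideal_domain TYPE('b))"
proof (intro conjI impI)
  assume A: "stably_free_ideal_domain TYPE('a)"
  then interpret domain_localization S \<phi>
    using assms unfolding stably_free_ideal_domain_def by unfold_locales blast+
  show "stably_free_ideal_domain TYPE('b)"
    using A is_domain_localization left_noetherian_localization right_noetherian_localization
      left_ideals_stably_free_localization right_ideals_stably_free_localization
    unfolding stably_free_ideal_domain_def by blast
next
  assume A: "semistably_free_ideal_domain TYPE('a)"
  then interpret domain_localization S \<phi>
    using assms unfolding semistably_free_ideal_domain_def ore_domain_def by unfold_locales blast+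
  show "semistably_free_ideal_domain TYPE('b)"
    using A is_domain_localization left_ore_localization right_ore_localization
      fg_left_ideals_stably_free_localization fg_right_ideals_stably_free_localization
    unfolding semistably_free_ideal_domain_def ore_domain_def by blast
qed

end
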